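(* $\mathrm{cov}(\mathcal M)\leq\mathfrak{ss}_c$ and dually $\mathfrak{ss}_c^\perp\leq\mathrm{non}(\mathcal M)$.
   Context: Let $\mathfrak S$ be the set of all sequences $\mathbf a=\langle a_i:i\in\omega\rangle$ of rational numbers with $a_i\to 0$. Let $[\omega]^\omega_\omega$ denote the set of infinite coinfinite subsets of $\omega$. For infinite $X\subseteq\omega$ with increasing enumeration $\langle i_n\rangle$ put $\mathbf a\restriction X=\langle a_{i_n}:n\in\omega\rangle$ and write $\sum_X\mathbf a$ for $\sum_n a_{i_n}$. A series is convergent if its partial sums converge to a real number; it is conditional if $\sum_{\{i:a_i>0\}}\mathbf a=\infty$ and $\sum_{\{i:a_i<0\}}\mathbf a=-\infty$; conditionally convergent if both. Let $\mathfrak S_c$, $\mathfrak S_{cc}$ be the sets of $\mathbf a\in\mathfrak S$ whose series is convergent, resp. conditionally convergent. $\mathfrak{ss}_c$ is the least cardinality of a family $\mathcal X\subseteq[\omega]^\omega_\omega$ such that for every $\mathbf a\in\mathfrak S_{cc}$ there is $X\in\mathcal X$ with $\sum_X\mathbf a$ convergent; $\mathfrak{ss}_c^\perp$ is the least cardinality of a family $\mathcal A\subseteq\mathfrak S_{cc}$ such that no $X\in[\omega]^\omega_\omega$ makes $\sum_X\mathbf a$ convergent for all $\mathbf a\in\mathcal A$. $\mathrm{cov}(\mathcal M)$ and $\mathrm{non}(\mathcal M)$ are the covering and uniformity numbers of the meagre ideal. *)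

theory Defs
  imports "HOL-Analysis.Analysis" "HOL-Library.Equipollence"
begin

definition nowhere_dense :: "real set \<Rightarrow> bool" where
  "nowhere_dense S \<longleftrightarrow> interior (closure S) = {}"

definition meagre :: "real set \<Rightarrow> bool" where
  "meagre S \<longleftrightarrow> (\<exists>F. countable F \<and> (\<forall>T\<in>F. nowhere_dense T) \<and> S \<subseteq> \<Union>F)"

definition infcoinf :: "nat set set" where
  "infcoinf = {X. infinite X \<and> infinite (UNIV - X)}"

definition sub_seq :: "(nat \<Rightarrow> rat) \<Rightarrow> nat set \<Rightarrow> nat \<Rightarrow> real" where
  "sub_seq a X = (\<lambda>n. real_of_rat (a (enumerate X n)))"

definition subseries_convergent :: "(nat \<Rightarrow> rat) \<Rightarrow> nat set \<Rightarrow> bool" where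
  "subseries_convergent a X \<longleftrightarrow> summable (sub_seq a X)"

definition seqs0 :: "(nat \<Rightarrow> rat) set" where
  "seqs0 = {a. (\<lambda>i. real_of_rat (a i)) \<longlonglongrightarrow> 0}"

definition conditional :: "(nat \<Rightarrow> rat) \<Rightarrow> bool" where
  "conditional a \<longleftrightarrow>
     infinite {i. a i > 0} \<and>
     filterlim (\<lambda>n. \<Sum>k<n. sub_seq a {i. a i > 0} k) at_top sequentially \<and>
     infinite {i. a i < 0} \<and>
     filterlim (\<lambda>n. \<Sum>k<n. sub_seq a {i. a i < 0} k) at_bot sequentially"

definition S_cc :: "(nat \<Rightarrow> rat) set" where
  "S_cc = {a \<in> seqs0. summable (\<lambda>i. real_of_rat (a i)) \<and> conditional a}"

end

theory Submission
  imports Defs "HOL-Analysis.Harmonic_Numbers"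
begin

text \<open>Code a real \<open>r\<close> by the series that carries \<open>1, -1, 1/2, -1/2, 1/3, \<dots>\<close> at the positions of
  the binary digits \<open>1\<close> of \<open>r\<close> and zeros elsewhere; this series is conditionally convergent.
  For infinite coinfinite \<open>X\<close>, the reals whose code has a convergent \<open>X\<close>-subseries form a meagre
  set: every finite binary prefix extends so that the next positive terms fall into \<open>X\<close> and the
  negative ones outside, whereby the \<open>X\<close>-subseries gains a block of size at least \<open>1/2\<close>, so the
  Cauchy criterion fails on a dense open set.  So a family witnessing \<open>ss\<^sub>c\<close> yields, via these
  meagre sets, a cover of the reals of no larger size, and the codes of the points of a non-meagre
  set have no common convergent subseries.\<close>

section \<open>Binary digits and dyadic intervals\<close>

definition binary_digit :: "real \<Rightarrow> nat \<Rightarrow> bool" where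
  "binary_digit r j \<longleftrightarrow> odd \<lfloor>2^j * r\<rfloor>"

definition dyadic_interval :: "nat \<Rightarrow> int \<Rightarrow> real set" where
  "dyadic_interval m k = {r. real_of_int k < 2^m * r \<and> 2^m * r < real_of_int k + 1}"

lemma floor_dyadic_interval: "r \<in> dyadic_interval m k \<Longrightarrow> \<lfloor>2^m * r\<rfloor> = k"
  unfolding dyadic_interval_def by (simp add: floor_eq_iff)

lemma open_dyadic_interval: "open (dyadic_interval m k)"
  unfolding dyadic_interval_def by (intro open_Collect_conj open_Collect_less continuous_intros)

lemma midpoint_in_dyadic_interval: "(2 * real_of_int k + 1) / 2^Suc m \<in> dyadic_interval m k"
  unfolding dyadic_interval_def by (simp add: field_simps)

lemma binary_digit_eq_floor_div:
  assumes "j \<le> m"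
  shows "binary_digit r j \<longleftrightarrow> odd (\<lfloor>2^m * r\<rfloor> div 2^(m - j))"
proof -
  have "(2::real)^m = 2^j * 2^(m - j)"
    using assms by (simp flip: power_add)
  then have "\<lfloor>2^j * r\<rfloor> = \<lfloor>2^m * r\<rfloor> div 2^(m - j)"
    using floor_divide_real_eq_div[where a = "2^m * r" and b = "2^(m - j)"] by simp
  then show ?thesis
    unfolding binary_digit_def by simp
qed

lemma binary_digit_dyadic_interval_eq:
  assumes "r \<in> dyadic_interval m k" "s \<in> dyadic_interval m k" "j \<le> m"
  shows "binary_digit r j = binary_digit s j"
  using assms by (simp add: binary_digit_eq_floor_div floor_dyadic_interval)

lemma dyadic_interval_child:
  assumes "c \<in> {0, 1}" "r \<in> dyadic_interval (Suc m) (2 * k + c)"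
  shows "r \<in> dyadic_interval m k" and "binary_digit r (Suc m) \<longleftrightarrow> c = 1"
proof -
  show "r \<in> dyadic_interval m k"
    using assms unfolding dyadic_interval_def by auto
  show "binary_digit r (Suc m) \<longleftrightarrow> c = 1"
    using assms floor_dyadic_interval[OF assms(2)] unfolding binary_digit_def by auto
qed

lemma dyadic_interval_prescribe_digits:
  assumes "m \<le> M"
  shows "\<exists>k'. dyadic_interval M k' \<subseteq> dyadic_interval m k \<and>
    (\<forall>r\<in>dyadic_interval M k'. \<forall>j. m < j \<and> j \<le> M \<longrightarrow> binary_digit r j = w j)"
  using assms
proof (induction M rule: dec_induct)
  case base
  show ?case by auto
next
  case (step M)
  then obtain k' where k': "dyadic_interval M k' \<subseteq> dyadic_interval m k"
    "\<forall>r\<in>dyadic_interval M k'. \<forall>j. m < j \<and> j \<le> M \<longrightarrow> binary_digit r j = w j"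
    by blast
  define c :: int where "c = (if w (Suc M) then 1 else 0)"
  have c: "c \<in> {0, 1}" unfolding c_def by simp
  have "dyadic_interval (Suc M) (2 * k' + c) \<subseteq> dyadic_interval M k'"
    using dyadic_interval_child(1)[OF c] by blast
  moreover have "binary_digit r (Suc M) = w (Suc M)" if "r \<in> dyadic_interval (Suc M) (2 * k' + c)" for r
    using dyadic_interval_child(2)[OF c that] unfolding c_def by simp
  ultimately show ?case
    using k' by (intro exI[of _ "2 * k' + c"]) (auto simp: le_Suc_eq)
qed

lemma open_contains_dyadic_interval:
  assumes "open U" "x \<in> U"
  obtains m k where "dyadic_interval m k \<subseteq> U"
proof -
  obtain e where e: "e > 0" "ball x e \<subseteq> U"
    using assms open_contains_ball by blast
  obtain m where m: "(1/2::real)^m < e"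
    using real_arch_pow_inv[OF e(1), of "1/2"] by auto
  have "dyadic_interval m \<lfloor>2^m * x\<rfloor> \<subseteq> ball x e"
  proof
    fix r assume "r \<in> dyadic_interval m \<lfloor>2^m * x\<rfloor>"
    then have "real_of_int \<lfloor>2^m * x\<rfloor> < 2^m * r" "2^m * r < real_of_int \<lfloor>2^m * x\<rfloor> + 1"
      unfolding dyadic_interval_def by auto
    moreover have "real_of_int \<lfloor>2^m * x\<rfloor> \<le> 2^m * x" "2^m * x < real_of_int \<lfloor>2^m * x\<rfloor> + 1"
      by linarith+
    ultimately have "\<bar>2^m * r - 2^m * x\<bar> < 1"
      by linarith
    then have "2^m * \<bar>r - x\<bar> < 1"
      by (simp add: abs_mult flip: right_diff_distrib)
    then have "\<bar>r - x\<bar> < (1/2)^m"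
      by (simp add: power_one_over field_simps)
    with m show "r \<in> ball x e"
      by (simp add: dist_real_def abs_minus_commute)
  qed
  with e that show ?thesis by blast
qed

lemma nowhere_dense_by_digit_extension:
  assumes "\<And>b m. \<exists>c M. (\<forall>j\<le>m. c j = b j) \<and> (\<forall>d. (\<forall>j\<le>M. d j = c j) \<longrightarrow> \<not> P d)"
  shows "nowhere_dense {r. P (binary_digit r)}" (is "nowhere_dense ?C")
  unfolding nowhere_dense_def
proof (rule ccontr)
  assume "interior (closure ?C) \<noteq> {}"
  then obtain x where x: "x \<in> interior (closure ?C)"
    by blast
  obtain m k where mk: "dyadic_interval m k \<subseteq> interior (closure ?C)"
    by (rule open_contains_dyadic_interval[OF open_interior x])
  obtain r0 where r0: "r0 \<in> dyadic_interval m k"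
    using midpoint_in_dyadic_interval by blast
  obtain c M where c: "\<forall>j\<le>m. c j = binary_digit r0 j"
    and refuted: "\<And>d. \<forall>j\<le>M. d j = c j \<Longrightarrow> \<not> P d"
    using assms[where b = "binary_digit r0" and m = m] by blast
  obtain k' where k': "dyadic_interval (max m M) k' \<subseteq> dyadic_interval m k"
    "\<forall>r\<in>dyadic_interval (max m M) k'. \<forall>j. m < j \<and> j \<le> max m M \<longrightarrow> binary_digit r j = c j"
    using dyadic_interval_prescribe_digits[of m "max m M" k c] by (meson max.cobounded1)
  have "r \<notin> ?C" if r: "r \<in> dyadic_interval (max m M) k'" for r
  proof -
    have "binary_digit r j = c j" if "j \<le> M" for j
    proof (cases "j \<le> m")
      case True
      then show ?thesis
        using binary_digit_dyadic_interval_eq[OF subsetD[OF k'(1) r] r0] c by simp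
    next
      case False
      then show ?thesis
        using k'(2) r that by simp
    qed
    then show ?thesis
      using refuted[of "binary_digit r"] by simp
  qed
  then have "dyadic_interval (max m M) k' \<inter> closure ?C = {}"
    using open_Int_closure_eq_empty[OF open_dyadic_interval] by blast
  moreover have "dyadic_interval (max m M) k' \<subseteq> closure ?C"
    using k'(1) mk interior_subset by blast
  ultimately show False
    using midpoint_in_dyadic_interval[of k' "max m M"] by blast
qed

section \<open>Subseries and sequences placed along a set of positions\<close>

lemma enumerate_range_strict_mono:
  assumes "strict_mono g"
  shows "enumerate (range g) = g"
proof
  have inf: "infinite (range g)"
    using assms strict_mono_imp_inj_on range_inj_infinite by blast
  fix n
  show "enumerate (range g) n = g n"
  proof (induction n)
    case 0
    have "(LEAST s. s \<in> range g) = g 0"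
      using assms by (intro Least_equality) (auto simp: strict_mono_less_eq)
    then show ?case
      by (simp only: enumerate_0)
  next
    case (Suc n)
    have "(LEAST s. s \<in> range g \<and> g n < s) = g (Suc n)"
      using assms by (intro Least_equality) (auto simp: strict_mono_less strict_mono_less_eq Suc_le_eq)
    with Suc show ?case
      by (simp add: enumerate_Suc''[OF inf])
  qed
qed

lemma enumerate_image_strict_mono:
  fixes e :: "nat \<Rightarrow> nat"
  assumes "strict_mono e" "infinite S"
  shows "enumerate (e ` S) = e \<circ> enumerate S"
proof -
  have "e ` S = range (e \<circ> enumerate S)"
    by (simp add: image_comp range_enumerate[OF assms(2)] flip: image_image)
  moreover have "strict_mono (e \<circ> enumerate S)"
    using assms(1) strict_mono_enumerate[OF assms(2)] by (rule strict_mono_o)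
  ultimately show ?thesis
    by (simp only: enumerate_range_strict_mono)
qed

lemma sub_seq_image_strict_mono:
  fixes e :: "nat \<Rightarrow> nat"
  assumes "strict_mono e" "infinite S"
  shows "sub_seq a (e ` S) = sub_seq (a \<circ> e) S"
  using enumerate_image_strict_mono[OF assms] by (simp add: sub_seq_def)

lemma summable_sub_seq_iff:
  assumes "infinite X"
  shows "summable (sub_seq a X) \<longleftrightarrow> summable (\<lambda>i. if i \<in> X then real_of_rat (a i) else 0)"
    (is "_ \<longleftrightarrow> summable ?f")
proof -
  have "(\<lambda>n. ?f (enumerate X n)) = sub_seq a X"
    using enumerate_in_set[OF assms] by (simp add: sub_seq_def)
  moreover have "?f i = 0" if "i \<notin> range (enumerate X)" for i
    using that by (simp add: range_enumerate[OF assms])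
  ultimately have "sub_seq a X sums l \<longleftrightarrow> ?f sums l" for l
    using sums_mono_reindex[OF strict_mono_enumerate[OF assms], of ?f] by simp
  then show ?thesis
    unfolding summable_def by blast
qed

definition num_true :: "(nat \<Rightarrow> bool) \<Rightarrow> nat \<Rightarrow> nat" where
  "num_true b n = card {j. j < n \<and> b j}"

definition along :: "(nat \<Rightarrow> bool) \<Rightarrow> (nat \<Rightarrow> 'a::zero) \<Rightarrow> nat \<Rightarrow> 'a" where
  "along b s i = (if b i then s (num_true b i) else 0)"

lemma num_true_cong: "(\<And>j. j < n \<Longrightarrow> b j = c j) \<Longrightarrow> num_true b n = num_true c n"
  unfolding num_true_def by (metis (mono_tags, lifting) Collect_cong)

lemma along_cong: "(\<And>j. j \<le> i \<Longrightarrow> b j = c j) \<Longrightarrow> along b s i = along c s i"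
  unfolding along_def using num_true_cong[of i b c] by simp

lemma of_rat_along: "real_of_rat (along b s i) = along b (\<lambda>k. real_of_rat (s k)) i"
  by (simp add: along_def)

lemma num_true_enumerate:
  assumes "infinite {j. b j}"
  shows "num_true b (enumerate {j. b j} k) = k"
proof -
  let ?e = "enumerate {j. b j}"
  have "{j. j < ?e k \<and> b j} = ?e ` {..<k}"
  proof (intro equalityI subsetI)
    fix j assume j: "j \<in> {j. j < ?e k \<and> b j}"
    then obtain l where "?e l = j"
      using enumerate_Ex[OF assms] by blast
    with j assms show "j \<in> ?e ` {..<k}"
      by auto
  qed (use assms enumerate_in_set[OF assms] in auto)
  then show ?thesis
    unfolding num_true_def using inj_enumerate[OF assms]
    by (simp add: card_image inj_on_subset)
qed

lemma along_enumerate: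
  assumes "infinite {j. b j}"
  shows "along b s (enumerate {j. b j} k) = s k"
  using enumerate_in_set[OF assms] num_true_enumerate[OF assms] by (simp add: along_def)

lemma sums_along:
  assumes "infinite {j. b j}"
  shows "along b s sums l \<longleftrightarrow> s sums l"
proof -
  have "(\<lambda>n. along b s (enumerate {j. b j} n)) = s"
    by (simp add: along_enumerate[OF assms])
  moreover have "along b s i = 0" if "i \<notin> range (enumerate {j. b j})" for i
    using that by (simp add: range_enumerate[OF assms] along_def)
  ultimately show ?thesis
    using sums_mono_reindex[OF strict_mono_enumerate[OF assms], of "along b s"] by simp
qed

lemma along_preimage:
  assumes "infinite {j. b j}" "\<not> P 0"
  shows "{i. P (along b s i)} = enumerate {j. b j} ` {k. P (s k)}"
proof (intro equalityI subsetI)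
  fix i assume i: "i \<in> {i. P (along b s i)}"
  then have "b i"
    using assms(2) by (auto simp: along_def split: if_splits)
  then obtain k where "enumerate {j. b j} k = i"
    using enumerate_Ex[OF assms(1)] by blast
  with i show "i \<in> enumerate {j. b j} ` {k. P (s k)}"
    by (auto simp: along_enumerate[OF assms(1)])
qed (auto simp: along_enumerate[OF assms(1)])

lemma conditional_along:
  assumes "infinite {j. b j}" "conditional s"
  shows "conditional (along b s)"
proof -
  let ?e = "enumerate {j. b j}"
  have e: "strict_mono ?e" "inj ?e"
    using strict_mono_enumerate[OF assms(1)] inj_enumerate[OF assms(1)] by blast+
  have "infinite {k. P (s k)} \<Longrightarrow> \<not> P 0 \<Longrightarrow>
      infinite {i. P (along b s i)} \<and> sub_seq (along b s) {i. P (along b s i)} = sub_seq s {k. P (s k)}"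
    for P :: "rat \<Rightarrow> bool"
    using along_preimage[OF assms(1), of P s] sub_seq_image_strict_mono[OF e(1)]
    by (simp add: finite_image_iff[OF inj_on_subset[OF e(2)]] comp_def along_enumerate[OF assms(1)])
  from this[of "\<lambda>x. x > 0"] this[of "\<lambda>x. x < 0"] assms(2) show ?thesis
    unfolding conditional_def by simp
qed

lemma along_append_single_true:
  fixes b :: "nat \<Rightarrow> bool"
  assumes "q \<le> x"
  defines "c \<equiv> \<lambda>j. if j < q then b j else j = x"
  shows "num_true c (Suc x) = Suc (num_true b q)"
    and "q \<le> i \<Longrightarrow> i \<le> x \<Longrightarrow> along c s i = (if i = x then s (num_true b q) else 0)"
proof -
  have below: "{j. j < i \<and> c j} = {j. j < q \<and> b j}" if "q \<le> i" "i \<le> x" for i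
    using that unfolding c_def by auto
  have "{j. j < Suc x \<and> c j} = insert x {j. j < q \<and> b j}"
    using assms(1) unfolding c_def by auto
  then show "num_true c (Suc x) = Suc (num_true b q)"
    unfolding num_true_def using assms(1) by simp
  show "along c s i = (if i = x then s (num_true b q) else 0)" if "q \<le> i" "i \<le> x"
  proof -
    have "num_true c i = num_true b q"
      using below[OF that] unfolding num_true_def by simp
    moreover have "c i \<longleftrightarrow> i = x"
      using that unfolding c_def by simp
    ultimately show ?thesis
      unfolding along_def by (simp only:)
  qed
qed

lemma S_cc_along:
  assumes "infinite {j. b j}" "s \<in> S_cc"
  shows "along b s \<in> S_cc"
proof -
  have "summable (\<lambda>k. real_of_rat (s k))"
    using assms(2) by (simp add: S_cc_def)
  then have "summable (\<lambda>i. real_of_rat (along b s i))"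
    unfolding of_rat_along summable_def sums_along[OF assms(1)] .
  with assms show ?thesis
    by (simp add: S_cc_def seqs0_def summable_LIMSEQ_zero conditional_along)
qed

section \<open>The alternating harmonic sequence\<close>

definition alt_harm :: "nat \<Rightarrow> rat" where
  "alt_harm k = (-1)^k / of_nat (k div 2 + 1)"

lemma of_rat_alt_harm: "real_of_rat (alt_harm k) = (-1)^k * (1 / (real (k div 2) + 1))"
  by (simp add: alt_harm_def of_rat_divide of_rat_power of_rat_add of_rat_of_nat_eq add.commute)

lemma summable_alt_harm: "summable (\<lambda>k. real_of_rat (alt_harm k))"
  unfolding of_rat_alt_harm
proof (rule summable_Leibniz')
  have le: "norm (1 / (real (n div 2) + 1)) \<le> 2 / real (Suc n)" for n
  proof -
    have "Suc n \<le> 2 * (n div 2 + 1)"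
      by (cases "even n") (auto elim!: evenE oddE)
    then have "real (Suc n) \<le> real (2 * (n div 2 + 1))"
      by (simp only: of_nat_le_iff)
    then show ?thesis
      by (simp add: field_simps)
  qed
  have lim: "(\<lambda>n. 2 / real (Suc n)) \<longlonglongrightarrow> 0"
    using tendsto_mult_right_zero[OF LIMSEQ_inverse_real_of_nat, of 2] by (simp add: divide_inverse)
  show "(\<lambda>n. 1 / (real (n div 2) + 1)) \<longlonglongrightarrow> 0"
    by (rule Lim_null_comparison[OF always_eventually lim]) (use le in blast)
  show "1 / (real (Suc n div 2) + 1) \<le> 1 / (real (n div 2) + 1)" for n
    by (intro divide_left_mono) (auto simp: div_le_mono)
qed simp

lemma alt_harm_pos_iff: "0 < alt_harm k \<longleftrightarrow> even k"
  by (cases "even k") (simp_all add: alt_harm_def zero_less_divide_iff)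

lemma alt_harm_neg_iff: "alt_harm k < 0 \<longleftrightarrow> odd k"
  by (cases "even k") (simp_all add: alt_harm_def divide_less_0_iff)

lemma conditional_alt_harm: "conditional alt_harm"
proof -
  have evens: "{k. 0 < alt_harm k} = range (\<lambda>k. 2 * k)"
    by (auto simp: alt_harm_pos_iff elim!: evenE)
  have odds: "{k. alt_harm k < 0} = range (\<lambda>k. 2 * k + 1)"
    by (auto simp: alt_harm_neg_iff elim!: oddE)
  have mono: "strict_mono (\<lambda>k::nat. 2 * k)" "strict_mono (\<lambda>k::nat. 2 * k + 1)"
    by (auto intro: strict_monoI)
  have "(\<lambda>n. \<Sum>k<n. sub_seq alt_harm {k. 0 < alt_harm k} k) = harm"
    unfolding evens sub_seq_def enumerate_range_strict_mono[OF mono(1)]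
    by (rule ext) (simp add: of_rat_alt_harm harm_altdef inverse_eq_divide add.commute)
  then have "filterlim (\<lambda>n. \<Sum>k<n. sub_seq alt_harm {k. 0 < alt_harm k} k) at_top sequentially"
    by (simp only: harm_at_top)
  moreover have "(\<lambda>n. \<Sum>k<n. sub_seq alt_harm {k. alt_harm k < 0} k) = (\<lambda>n. - harm n)"
    unfolding odds sub_seq_def enumerate_range_strict_mono[OF mono(2)]
    by (rule ext) (simp add: of_rat_alt_harm harm_altdef inverse_eq_divide add.commute sum_negf)
  then have "filterlim (\<lambda>n. \<Sum>k<n. sub_seq alt_harm {k. alt_harm k < 0} k) at_bot sequentially"
    by (simp only: filterlim_uminus_at_top[THEN iffD1, OF harm_at_top])
  moreover have "infinite {k. 0 < alt_harm k}" "infinite {k. alt_harm k < 0}"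
    unfolding evens odds using mono by (auto intro!: range_inj_infinite strict_mono_imp_inj_on)
  ultimately show ?thesis
    unfolding conditional_def by blast
qed

lemma alt_harm_S_cc: "alt_harm \<in> S_cc"
  using summable_alt_harm conditional_alt_harm
  by (simp add: S_cc_def seqs0_def summable_LIMSEQ_zero)

lemma sum_max_alt_harm: "(\<Sum>k<2 * n. max 0 (real_of_rat (alt_harm k))) = harm n"
proof (induction n)
  case (Suc n)
  have "2 * Suc n = Suc (Suc (2 * n))"
    by simp
  with Suc show ?case
    by (simp add: of_rat_alt_harm harm_Suc inverse_eq_divide add.commute)
qed (simp add: harm_def)

lemma alt_harm_positive_block:
  "\<exists>K. 1/2 \<le> (\<Sum>k\<in>{C..<C + K}. max 0 (real_of_rat (alt_harm k)))"
proof -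
  let ?f = "\<lambda>k. max 0 (real_of_rat (alt_harm k))"
  obtain n where n: "real C + 1/2 \<le> harm n"
    using filterlim_at_top[THEN iffD1, OF harm_at_top, rule_format, of "real C + 1/2"]
    by (auto simp: eventually_sequentially)
  have "harm n \<le> (\<Sum>k<C + 2 * n. ?f k)"
    unfolding sum_max_alt_harm[symmetric] by (rule sum_mono2) auto
  also have "\<dots> = (\<Sum>k<C. ?f k) + (\<Sum>k\<in>{C..<C + 2 * n}. ?f k)"
    using sum.atLeastLessThan_concat[of 0 C "C + 2 * n" ?f] by (simp add: atLeast0LessThan)
  also have "(\<Sum>k<C. ?f k) \<le> real C"
  proof -
    have "?f k \<le> 1" for k
      by (cases "even k") (auto simp: of_rat_alt_harm field_simps)
    then show ?thesis
      using sum_bounded_above[of "{..<C}" ?f 1] by simp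
  qed
  finally show ?thesis
    using n by (intro exI[of _ "2 * n"]) linarith
qed

section \<open>Meagreness of the sets of convergence\<close>

text \<open>Appending single digits \<open>1\<close>, each placed inside \<open>X\<close> exactly when its term is positive,
  lets the \<open>X\<close>-part of a block collect the positive parts of the next \<open>K\<close> terms of \<open>s\<close>.\<close>
lemma extend_positive_block:
  fixes s :: "nat \<Rightarrow> real"
  assumes "infinite X" "infinite (- X)"
  shows "\<exists>c q. (\<forall>j<p. c j = b j) \<and> p \<le> q \<and> num_true c q = num_true b p + K \<and>
    (\<Sum>i\<in>{p..<q}. if i \<in> X then along c s i else 0) =
    (\<Sum>k\<in>{num_true b p..<num_true b p + K}. max 0 (s k))"
proof (induction K)
  case 0
  show ?case
    by (intro exI[of _ b] exI[of _ p]) simp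
next
  case (Suc K)
  then obtain c q where c: "\<forall>j<p. c j = b j" "p \<le> q" "num_true c q = num_true b p + K"
    and block: "(\<Sum>i\<in>{p..<q}. if i \<in> X then along c s i else 0) =
      (\<Sum>k\<in>{num_true b p..<num_true b p + K}. max 0 (s k))"
    by blast
  let ?C = "num_true c q"
  obtain x where x: "q \<le> x" "x \<in> X \<longleftrightarrow> 0 < s ?C"
    using assms unfolding infinite_nat_iff_unbounded_le by (cases "0 < s ?C") auto
  define c' where "c' = (\<lambda>j. if j < q then c j else j = x)"
  let ?F = "\<lambda>c i. if i \<in> X then along c s i else 0"
  have "sum (?F c') {p..<Suc x} = sum (?F c') {p..<q} + sum (?F c') {q..<Suc x}"
    using c(2) x(1) by (simp add: sum.atLeastLessThan_concat)
  also have "sum (?F c') {p..<q} = sum (?F c) {p..<q}"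
    by (intro sum.cong refl) (auto simp: c'_def intro!: along_cong)
  also have "sum (?F c') {q..<Suc x} = max 0 (s ?C)"
  proof -
    have "sum (?F c') {q..<Suc x} = (\<Sum>i\<in>{q..<Suc x}. if i = x then (if x \<in> X then s ?C else 0) else 0)"
      by (intro sum.cong refl) (auto simp: c'_def along_append_single_true(2)[OF x(1)])
    with x show ?thesis
      by auto
  qed
  also have "sum (?F c) {p..<q} + max 0 (s ?C) = (\<Sum>k\<in>{num_true b p..<num_true b p + Suc K}. max 0 (s k))"
    using block c(3) by simp
  finally have "sum (?F c') {p..<Suc x} = (\<Sum>k\<in>{num_true b p..<num_true b p + Suc K}. max 0 (s k))" .
  moreover have "num_true c' (Suc x) = num_true b p + Suc K"
    using along_append_single_true(1)[OF x(1)] c(3) unfolding c'_def by simp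
  moreover have "\<forall>j<p. c' j = b j"
    using c(1,2) unfolding c'_def by simp
  ultimately show ?case
    using c(2) x(1) by (intro exI[of _ c'] exI[of _ "Suc x"]) auto
qed

lemma nowhere_dense_finitely_many_ones: "nowhere_dense {r. \<forall>j\<ge>N. \<not> binary_digit r j}"
proof -
  have "nowhere_dense {r. (\<lambda>d. \<forall>j\<ge>N. \<not> d j) (binary_digit r)}"
  proof (rule nowhere_dense_by_digit_extension)
    fix b :: "nat \<Rightarrow> bool" and m
    let ?M = "Suc (max m N)"
    show "\<exists>c M. (\<forall>j\<le>m. c j = b j) \<and> (\<forall>d. (\<forall>j\<le>M. d j = c j) \<longrightarrow> \<not> (\<forall>j\<ge>N. \<not> d j))"
    proof (intro exI[of _ "b(?M := True)"] exI[of _ ?M] conjI allI impI)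
      fix d assume "\<forall>j\<le>?M. d j = (b(?M := True)) j"
      then have "d ?M"
        by simp
      then show "\<not> (\<forall>j\<ge>N. \<not> d j)"
        by (meson le_SucI max.cobounded2)
    qed auto
  qed
  then show ?thesis
    by simp
qed

lemma nowhere_dense_small_blocks:
  assumes "infinite X" "infinite (- X)"
  shows "nowhere_dense {r. \<forall>p\<ge>N. \<forall>q.
    \<bar>\<Sum>i\<in>{p..<q}. if i \<in> X then real_of_rat (along (binary_digit r) alt_harm i) else 0\<bar> < 1/2}"
proof -
  let ?s = "\<lambda>k. real_of_rat (alt_harm k)"
  let ?P = "\<lambda>d. \<forall>p\<ge>N. \<forall>q. \<bar>\<Sum>i\<in>{p..<q}. if i \<in> X then along d ?s i else 0\<bar> < 1/2"
  have "nowhere_dense {r. ?P (binary_digit r)}"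
  proof (rule nowhere_dense_by_digit_extension)
    fix b :: "nat \<Rightarrow> bool" and m
    let ?p = "max (Suc m) N"
    obtain K where K: "1/2 \<le> (\<Sum>k\<in>{num_true b ?p..<num_true b ?p + K}. max 0 (?s k))"
      using alt_harm_positive_block by blast
    obtain c q where c: "\<forall>j<?p. c j = b j"
      and block: "(\<Sum>i\<in>{?p..<q}. if i \<in> X then along c ?s i else 0) =
        (\<Sum>k\<in>{num_true b ?p..<num_true b ?p + K}. max 0 (?s k))"
      using extend_positive_block[OF assms, of ?p b K ?s] by blast
    have "\<not> ?P d" if "\<forall>j\<le>q. d j = c j" for d
    proof -
      let ?block = "\<Sum>i\<in>{?p..<q}. if i \<in> X then along d ?s i else 0"
      have "?block = (\<Sum>i\<in>{?p..<q}. if i \<in> X then along c ?s i else 0)"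
        using that by (intro sum.cong refl) (auto intro!: along_cong)
      with block K have "1/2 \<le> \<bar>?block\<bar>"
        by linarith
      moreover have "?P d \<Longrightarrow> \<bar>?block\<bar> < 1/2"
        by simp
      ultimately show ?thesis
        by (meson not_le)
    qed
    moreover have "\<forall>j\<le>m. c j = b j"
      using c by simp
    ultimately show "\<exists>c M. (\<forall>j\<le>m. c j = b j) \<and> (\<forall>d. (\<forall>j\<le>M. d j = c j) \<longrightarrow> \<not> ?P d)"
      by blast
  qed
  then show ?thesis
    by (simp only: of_rat_along)
qed

text \<open>The dyadic rationals, whose binary expansions have only finitely many digits \<open>1\<close>,
  get a fixed code.\<close>
definition digit_series :: "real \<Rightarrow> nat \<Rightarrow> rat" where
  "digit_series r = along (if infinite {j. binary_digit r j} then binary_digit r else (\<lambda>_. True)) alt_harm"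

lemma digit_series_S_cc: "digit_series r \<in> S_cc"
proof -
  have "infinite {j. (if infinite {j. binary_digit r j} then binary_digit r else (\<lambda>_. True)) j}"
    by (cases "infinite {j. binary_digit r j}") simp_all
  then show ?thesis
    unfolding digit_series_def by (rule S_cc_along[OF _ alt_harm_S_cc])
qed

lemma meagre_convergent_digit_series:
  assumes "X \<in> infcoinf"
  shows "meagre {r. subseries_convergent (digit_series r) X}"
proof -
  have X: "infinite X" "infinite (- X)"
    using assms by (auto simp: infcoinf_def Compl_eq_Diff_UNIV)
  let ?f = "\<lambda>r i. if i \<in> X then real_of_rat (along (binary_digit r) alt_harm i) else 0"
  define Z where "Z N = {r. \<forall>j\<ge>N. \<not> binary_digit r j}" for N
  define B where "B N = {r. \<forall>p\<ge>N. \<forall>q. \<bar>\<Sum>i\<in>{p..<q}. ?f r i\<bar> < 1/2}" for N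
  have cover: "\<exists>N. r \<in> Z N \<union> B N" if r: "subseries_convergent (digit_series r) X" for r
  proof (cases "infinite {j. binary_digit r j}")
    case True
    then have "summable (?f r)"
      using r X(1) by (simp add: subseries_convergent_def digit_series_def summable_sub_seq_iff)
    then obtain N where "\<forall>p\<ge>N. \<forall>q. norm (\<Sum>i\<in>{p..<q}. ?f r i) < 1/2"
      using summable_Cauchy[THEN iffD1, rule_format, of "?f r" "1/2"] by auto
    then have "r \<in> B N"
      unfolding B_def by (simp only: real_norm_def mem_Collect_eq)
    then show ?thesis
      by blast
  next
    case False
    then obtain N where "\<forall>j\<in>{j. binary_digit r j}. j < N"
      unfolding finite_nat_set_iff_bounded by blast
    then have "r \<in> Z N"
      unfolding Z_def using leD by blast
    then show ?thesis
      by blast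
  qed
  have nowhere_dense: "nowhere_dense (Z N)" "nowhere_dense (B N)" for N
    unfolding Z_def B_def by (rule nowhere_dense_finitely_many_ones nowhere_dense_small_blocks[OF X])+
  show ?thesis
    unfolding meagre_def
  proof (intro exI[of _ "range Z \<union> range B"] conjI)
    show "countable (range Z \<union> range B)"
      by simp
    show "\<forall>T\<in>range Z \<union> range B. nowhere_dense T"
      using nowhere_dense by blast
    show "{r. subseries_convergent (digit_series r) X} \<subseteq> \<Union> (range Z \<union> range B)"
      using cover by blast
  qed
qed

lemma meagre_subset: "meagre S \<Longrightarrow> Y \<subseteq> S \<Longrightarrow> meagre Y"
  unfolding meagre_def by (meson order_trans)

lemma meagre_cover_from_convergence_family:
  assumes "\<X> \<subseteq> infcoinf" "\<forall>a\<in>S_cc. \<exists>X\<in>\<X>. subseries_convergent a X"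
  shows "\<exists>F. (\<forall>M\<in>F. meagre M) \<and> \<Union>F = (UNIV :: real set) \<and> F \<lesssim> \<X>"
proof -
  let ?F = "(\<lambda>X. {r. subseries_convergent (digit_series r) X}) ` \<X>"
  have "meagre {r. subseries_convergent (digit_series r) X}" if "X \<in> \<X>" for X
    using assms(1) that by (intro meagre_convergent_digit_series) blast
  then have "\<forall>M\<in>?F. meagre M"
    by blast
  moreover have "\<Union>?F = UNIV"
    using assms(2) digit_series_S_cc by blast
  ultimately show ?thesis
    by (intro exI[of _ ?F]) (simp add: image_lepoll)
qed

lemma no_common_convergent_subseries:
  assumes "\<not> meagre Y"
  shows "\<exists>A. A \<subseteq> S_cc \<and> A \<lesssim> Y \<and> \<not> (\<exists>X\<in>infcoinf. \<forall>a\<in>A. subseries_convergent a X)"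
proof -
  have "\<not> (\<forall>a\<in>digit_series ` Y. subseries_convergent a X)" if "X \<in> infcoinf" for X
  proof
    assume "\<forall>a\<in>digit_series ` Y. subseries_convergent a X"
    then have "Y \<subseteq> {r. subseries_convergent (digit_series r) X}"
      by blast
    with assms show False
      using meagre_subset meagre_convergent_digit_series[OF that] by blast
  qed
  moreover have "digit_series ` Y \<subseteq> S_cc"
    using digit_series_S_cc by blast
  ultimately show ?thesis
    by (intro exI[of _ "digit_series ` Y"]) (simp add: image_lepoll)
qed

theorem mainTheorem3:
  shows "(\<forall>\<X>. \<X> \<subseteq> infcoinf \<and> (\<forall>a\<in>S_cc. \<exists>X\<in>\<X>. subseries_convergent a X) \<longrightarrow>
            (\<exists>F. (\<forall>M\<in>F. meagre M) \<and> \<Union>F = (UNIV :: real set) \<and> F \<lesssim> \<X>))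
       \<and> (\<forall>Y :: real set. \<not> meagre Y \<longrightarrow>
            (\<exists>A. A \<subseteq> S_cc \<and> A \<lesssim> Y \<and>
                 \<not> (\<exists>X\<in>infcoinf. \<forall>a\<in>A. subseries_convergent a X)))"
  using meagre_cover_from_convergence_family no_common_convergent_subseries by blast

end
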